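(* Let $k\ge 1$, let $\alpha=\alpha(t,x,x_1)$, $\beta=\beta(t,x,x_1)$, $\gamma^{(1)}=\gamma^{(1)}(t,x,x_1)$ be smooth with $\beta-\alpha x_1\neq 0$, and let $\tau^{(k)}=\alpha\partial_t+\beta\partial_x+\sum_{i=1}^k\gamma^{(i)}\partial_{x_i}$ be the telescopic vector field with $\gamma^{(i)}$, $2\le i\le k$, defined by $$\gamma^{(i)}=D_t(\gamma^{(i-1)})-D_t(\alpha)x_i+\frac{\gamma^{(1)}+x_1D_t\alpha-D_t\beta}{\beta-x_1\alpha}\big(\gamma^{(i-1)}-\alpha x_i\big).$$ Then, as derivations acting on functions of $(t,x,x_1,\ldots,x_{k-1})$, $$[\tau^{(k)},D_t]=\lambda\,\tau^{(k)}+\mu\,D_t,\qquad \lambda=\frac{\gamma^{(1)}+x_1D_t\alpha-D_t\beta}{\beta-x_1\alpha},\quad \mu=-(D_t+\lambda)(\alpha).$$ Consequently, the coefficients of $\tau^{(k)}$ satisfy the $\lambda$-prolongation recurrence for this $\lambda$ (which depends on $(t,x,x_1,x_2)$), i.e. formally $\tau^{(k)}=(\alpha\partial_t+\beta\partial_x)^{[\lambda,(k)]}$.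
   Context: Jet coordinates $(t,x,x_1,x_2,\ldots)$, $x_i=d^ix/dt^i$; $D_t=\partial_t+x_1\partial_x+x_2\partial_{x_1}+\cdots$ the total derivative. For functions $\rho,\phi^0,\lambda$ possibly depending on finitely many jet variables, the formal $\lambda$-prolongation $(\rho\partial_t+\phi^0\partial_x)^{[\lambda,(k)]}=\rho\partial_t+\phi^0\partial_x+\sum_{i=1}^k\phi^{[\lambda,(i)]}\partial_{x_i}$ is defined by $\phi^{[\lambda,(0)]}=\phi^0$ and $\phi^{[\lambda,(i)]}=D_t(\phi^{[\lambda,(i-1)]})-D_t(\rho)x_i+\lambda(\phi^{[\lambda,(i-1)]}-\rho x_i)$. *)

theory Defs
  imports "HOL-Analysis.Analysis"
begin

text \<open>Jet coordinates: T is t, X 0 is x, X i is x_i = d^i x / dt^i.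
  A jet point is an assignment of real values to all coordinates; a jet function
  is a real-valued function of a jet point.\<close>

datatype coord = T | X nat

type_synonym jetfun = "(coord \<Rightarrow> real) \<Rightarrow> real"

definition jet_order :: "jetfun \<Rightarrow> nat \<Rightarrow> bool" where
  "jet_order f n \<longleftrightarrow>
     (\<forall>p q. p T = q T \<and> (\<forall>i\<le>n. p (X i) = q (X i)) \<longrightarrow> f p = f q)"

definition jord :: "jetfun \<Rightarrow> nat" where
  "jord f = (LEAST n. jet_order f n)"

definition pd :: "coord \<Rightarrow> jetfun \<Rightarrow> jetfun" where
  "pd c f p = deriv (\<lambda>s. f (p(c := s))) (p c)"

fun iter_pd :: "coord list \<Rightarrow> jetfun \<Rightarrow> jetfun" where
  "iter_pd [] f = f"
| "iter_pd (c # cs) f = pd c (iter_pd cs f)"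

text \<open>Smooth function of finitely many jet variables: all iterated partial derivatives
  exist and are continuous (product topology; equivalent to continuity in the
  finitely many variables f depends on).\<close>
definition jsmooth :: "jetfun \<Rightarrow> bool" where
  "jsmooth f \<longleftrightarrow> (\<exists>n. jet_order f n) \<and>
     (\<forall>cs. continuous_on UNIV (iter_pd cs f) \<and>
        (\<forall>c p. (\<lambda>s. iter_pd cs f (p(c := s))) differentiable (at (p c))))"

definition Dt :: "jetfun \<Rightarrow> jetfun" where
  "Dt f p = pd T f p + (\<Sum>i\<le>jord f. p (X (Suc i)) * pd (X i) f p)"

text \<open>Formal lambda-prolongation coefficients phi^{[lambda,(i)]} of rho d_t + phi0 d_x.\<close>
fun prolong :: "jetfun \<Rightarrow> jetfun \<Rightarrow> jetfun \<Rightarrow> nat \<Rightarrow> jetfun" where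
  "prolong rho phi0 lam 0 = phi0"
| "prolong rho phi0 lam (Suc i) = (\<lambda>p.
     Dt (prolong rho phi0 lam i) p - Dt rho p * p (X (Suc i))
     + lam p * (prolong rho phi0 lam i p - rho p * p (X (Suc i))))"

definition tlam :: "jetfun \<Rightarrow> jetfun \<Rightarrow> jetfun \<Rightarrow> jetfun" where
  "tlam a b g1 p = (g1 p + p (X 1) * Dt a p - Dt b p) / (b p - p (X 1) * a p)"

text \<open>Telescopic coefficients gamma^{(i)}, i \<ge> 1 (index 0 is unused and set to beta).\<close>
fun tgam :: "jetfun \<Rightarrow> jetfun \<Rightarrow> jetfun \<Rightarrow> nat \<Rightarrow> jetfun" where
  "tgam a b g1 0 = b"
| "tgam a b g1 (Suc 0) = g1"
| "tgam a b g1 (Suc (Suc i)) = (\<lambda>p.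
     Dt (tgam a b g1 (Suc i)) p - Dt a p * p (X (Suc (Suc i)))
     + tlam a b g1 p * (tgam a b g1 (Suc i) p - a p * p (X (Suc (Suc i)))))"

definition ttau :: "nat \<Rightarrow> jetfun \<Rightarrow> jetfun \<Rightarrow> jetfun \<Rightarrow> jetfun \<Rightarrow> jetfun" where
  "ttau k a b g1 f p = a p * pd T f p + b p * pd (X 0) f p
     + (\<Sum>i=1..k. tgam a b g1 i p * pd (X i) f p)"

end

theory Submission
  imports Defs
begin

text \<open>For a vector field \<alpha> \<partial>_t + \<Sum>_i \<xi>_i \<partial>_{x_i}, the commutator with D_t acts on functions of
  order at most m as -(D_t \<alpha>) \<partial>_t + \<Sum>_{j\<le>m} (\<xi>_{j+1} - D_t \<xi>_j) \<partial>_{x_j}; the only analytic input is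
  \<partial>_{x_{j+1}} D_t = D_t \<partial>_{x_{j+1}} + \<partial>_{x_j}, i.e. symmetry of mixed partials. The telescopic
  recurrence says precisely \<xi>_{j+1} - D_t \<xi>_j = \<lambda> (\<xi>_j - \<alpha> x_{j+1}) - (D_t \<alpha>) x_{j+1}, and the choice
  of \<lambda> makes this hold for j = 0 too; regrouping gives \<lambda> \<tau> + \<mu> D_t with \<mu> = -(D_t \<alpha> + \<lambda> \<alpha>).
  The same recurrence is literally the \<lambda>-prolongation formula.\<close>

section \<open>Symmetry of mixed partial derivatives\<close>

lemma mixed_second_difference_mvt:
  fixes h hx hy hxy hyx :: "real \<Rightarrow> real \<Rightarrow> real"
  assumes hx: "\<And>x y. ((\<lambda>x. h x y) has_real_derivative hx x y) (at x)"
    and hxy: "\<And>x y. ((\<lambda>y. hx x y) has_real_derivative hxy x y) (at y)"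
    and hy: "\<And>x y. ((\<lambda>y. h x y) has_real_derivative hy x y) (at y)"
    and hyx: "\<And>x y. ((\<lambda>x. hy x y) has_real_derivative hyx x y) (at x)"
    and "s > 0"
  obtains u v u' v' where "u \<in> {x0<..<x0+s}" "v \<in> {y0<..<y0+s}"
    "u' \<in> {x0<..<x0+s}" "v' \<in> {y0<..<y0+s}" "hxy u v = hyx u' v'"
proof -
  have dx: "((\<lambda>x. h x (y0+s) - h x y0) has_real_derivative hx x (y0+s) - hx x y0) (at x)" for x
    by (intro DERIV_diff hx)
  obtain u where u: "x0 < u" "u < x0 + s"
    "(h (x0+s) (y0+s) - h (x0+s) y0) - (h x0 (y0+s) - h x0 y0) = s * (hx u (y0+s) - hx u y0)"
    using MVT2[of x0 "x0+s", OF _ dx] \<open>s > 0\<close> by auto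
  obtain v where v: "y0 < v" "v < y0 + s" "hx u (y0+s) - hx u y0 = s * hxy u v"
    using MVT2[of y0 "y0+s" "\<lambda>y. hx u y" "\<lambda>y. hxy u y"] \<open>s > 0\<close> hxy by auto
  have dy: "((\<lambda>y. h (x0+s) y - h x0 y) has_real_derivative hy (x0+s) y - hy x0 y) (at y)" for y
    by (intro DERIV_diff hy)
  obtain v' where v': "y0 < v'" "v' < y0 + s"
    "(h (x0+s) (y0+s) - h x0 (y0+s)) - (h (x0+s) y0 - h x0 y0) = s * (hy (x0+s) v' - hy x0 v')"
    using MVT2[of y0 "y0+s", OF _ dy] \<open>s > 0\<close> by auto
  obtain u' where u': "x0 < u'" "u' < x0 + s" "hy (x0+s) v' - hy x0 v' = s * hyx u' v'"
    using MVT2[of x0 "x0+s" "\<lambda>x. hy x v'" "\<lambda>x. hyx x v'"] \<open>s > 0\<close> hyx by auto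
  have "s * (s * hxy u v) = s * (s * hyx u' v')"
    using u(3) v(3) v'(3) u'(3) by (simp add: algebra_simps)
  with \<open>s > 0\<close> have "hxy u v = hyx u' v'" by simp
  with u v u' v' show thesis by (intro that) auto
qed

lemma mixed_partials_eq:
  fixes h hx hy hxy hyx :: "real \<Rightarrow> real \<Rightarrow> real"
  assumes "\<And>x y. ((\<lambda>x. h x y) has_real_derivative hx x y) (at x)"
    and "\<And>x y. ((\<lambda>y. hx x y) has_real_derivative hxy x y) (at y)"
    and "\<And>x y. ((\<lambda>y. h x y) has_real_derivative hy x y) (at y)"
    and "\<And>x y. ((\<lambda>x. hy x y) has_real_derivative hyx x y) (at x)"
    and cont_xy: "continuous_on UNIV (\<lambda>z. hxy (fst z) (snd z))"
    and cont_yx: "continuous_on UNIV (\<lambda>z. hyx (fst z) (snd z))"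
  shows "hxy x0 y0 = hyx x0 y0"
proof (rule ccontr)
  assume ne: "hxy x0 y0 \<noteq> hyx x0 y0"
  define e where "e = \<bar>hxy x0 y0 - hyx x0 y0\<bar> / 2"
  have "e > 0" using ne by (simp add: e_def)
  obtain d1 where "d1 > 0" and d1: "\<And>z. dist z (x0, y0) < d1 \<Longrightarrow> dist (hxy (fst z) (snd z)) (hxy x0 y0) < e"
    using cont_xy \<open>e > 0\<close> unfolding continuous_on_iff by (metis UNIV_I fst_conv snd_conv)
  obtain d2 where "d2 > 0" and d2: "\<And>z. dist z (x0, y0) < d2 \<Longrightarrow> dist (hyx (fst z) (snd z)) (hyx x0 y0) < e"
    using cont_yx \<open>e > 0\<close> unfolding continuous_on_iff by (metis UNIV_I fst_conv snd_conv)
  define s where "s = min d1 d2 / 2"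
  have "s > 0" using \<open>d1 > 0\<close> \<open>d2 > 0\<close> by (simp add: s_def)
  obtain u v u' v' where uv: "u \<in> {x0<..<x0+s}" "v \<in> {y0<..<y0+s}"
    "u' \<in> {x0<..<x0+s}" "v' \<in> {y0<..<y0+s}" and eq: "hxy u v = hyx u' v'"
    using mixed_second_difference_mvt[OF assms(1-4) \<open>s > 0\<close>] by blast
  have near: "dist (x, y) (x0, y0) < 2 * s" if "x \<in> {x0<..<x0+s}" "y \<in> {y0<..<y0+s}" for x y
  proof -
    have "dist (x, y) (x0, y0) \<le> \<bar>x - x0\<bar> + \<bar>y - y0\<bar>"
      using sqrt_sum_squares_le_sum_abs by (simp add: dist_Pair_Pair dist_real_def)
    with that show ?thesis by auto
  qed
  have "dist (hxy u v) (hxy x0 y0) < e" using d1[of "(u, v)"] near[OF uv(1,2)] s_def by auto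
  moreover have "dist (hyx u' v') (hyx x0 y0) < e" using d2[of "(u', v')"] near[OF uv(3,4)] s_def by auto
  ultimately show False using eq unfolding e_def dist_real_def by (auto simp: abs_real_def split: if_splits)
qed

section \<open>Partial derivatives of jet functions\<close>

lemma jet_order_mono: "jet_order f n \<Longrightarrow> n \<le> N \<Longrightarrow> jet_order f N"
  unfolding jet_order_def by auto

lemma jet_order_binop:
  assumes "jet_order f n" "jet_order g m"
  shows "jet_order (\<lambda>p. H (f p) (g p)) (n + m)"
proof -
  have "jet_order f (n + m)" "jet_order g (n + m)"
    using assms by (auto intro: jet_order_mono)
  then show ?thesis unfolding jet_order_def by metis
qed

lemma jet_order_coord: "\<exists>n. jet_order (\<lambda>p. p c) n"
  by (cases c) (auto simp: jet_order_def)

lemma pd_const: "pd c (\<lambda>p. r) p = 0"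
  unfolding pd_def by simp

lemma pd_coord: "pd c (\<lambda>q. q d) p = (if c = d then 1 else 0)"
  unfolding pd_def by simp

lemma pd_beyond_order:
  assumes "jet_order f n" "n < i"
  shows "pd (X i) f p = 0"
proof -
  have "f (p(X i := s)) = f p" for s
    using assms unfolding jet_order_def by (metis fun_upd_other coord.distinct(1) coord.inject leD)
  then show ?thesis unfolding pd_def by simp
qed

lemma jet_order_pd:
  assumes "jet_order f n"
  shows "jet_order (pd c f) n"
  unfolding jet_order_def
proof (intro allI impI)
  fix p q :: "coord \<Rightarrow> real"
  assume pq: "p T = q T \<and> (\<forall>i\<le>n. p (X i) = q (X i))"
  show "pd c f p = pd c f q"
  proof (cases "\<exists>i. c = X i \<and> n < i")
    case True
    then show ?thesis using pd_beyond_order[OF assms] by auto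
  next
    case False
    then have "p c = q c" using pq by (cases c) auto
    moreover have "f (p(c := s)) = f (q(c := s))" for s
      using assms pq unfolding jet_order_def by auto
    ultimately show ?thesis unfolding pd_def by simp
  qed
qed

abbreviation partial_differentiable :: "jetfun \<Rightarrow> coord \<Rightarrow> (coord \<Rightarrow> real) \<Rightarrow> bool" where
  "partial_differentiable f c p \<equiv> (\<lambda>s. f (p(c := s))) differentiable (at (p c))"

lemma has_real_derivative_pd:
  assumes "partial_differentiable f c p"
  shows "((\<lambda>s. f (p(c := s))) has_real_derivative pd c f p) (at (p c))"
  using assms unfolding pd_def by (simp add: DERIV_deriv_iff_real_differentiable)

lemma jsmooth_partial_differentiable:
  "jsmooth f \<Longrightarrow> partial_differentiable (iter_pd cs f) c p"
  unfolding jsmooth_def by blast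

lemma continuous_on_upd2:
  assumes "continuous_on UNIV F"
  shows "continuous_on UNIV (\<lambda>z::real \<times> real. F (p(c := fst z, d := snd z)))"
proof -
  have "continuous_on UNIV (\<lambda>z::real \<times> real. p(c := fst z, d := snd z))"
  proof (rule continuous_on_coordinatewise_then_product)
    show "continuous_on UNIV (\<lambda>z::real \<times> real. (p(c := fst z, d := snd z)) i)" for i
      by (cases "i = d"; cases "i = c") (auto intro: continuous_intros)
  qed
  then show ?thesis by (rule continuous_on_compose2[OF assms]) auto
qed

lemma pd_commute:
  assumes f: "jsmooth f"
  shows "pd c (pd d f) p = pd d (pd c f) p"
proof (cases "c = d")
  case False
  let ?q = "\<lambda>x y. p(c := x, d := y)"
  have upd_c: "(?q x y)(c := s) = ?q s y" and upd_d: "(?q x y)(d := s) = ?q x s" for x y s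
    using False by (auto simp: fun_eq_iff)
  have at_c: "?q x y c = x" and at_d: "?q x y d = y" for x y
    using False by auto
  have deriv_c: "((\<lambda>x. iter_pd cs f (?q x y)) has_real_derivative pd c (iter_pd cs f) (?q x y)) (at x)"
    for cs x y
    using has_real_derivative_pd
        [OF jsmooth_partial_differentiable[OF f, where cs = cs and c = c and p = "?q x y"]]
    unfolding upd_c at_c .
  have deriv_d: "((\<lambda>y. iter_pd cs f (?q x y)) has_real_derivative pd d (iter_pd cs f) (?q x y)) (at y)"
    for cs x y
    using has_real_derivative_pd
        [OF jsmooth_partial_differentiable[OF f, where cs = cs and c = d and p = "?q x y"]]
    unfolding upd_d at_d .
  have cont: "continuous_on UNIV (\<lambda>z. iter_pd cs f (?q (fst z) (snd z)))" for cs
    using f unfolding jsmooth_def by (blast intro: continuous_on_upd2)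
  have "pd d (pd c f) (?q (p c) (p d)) = pd c (pd d f) (?q (p c) (p d))"
    by (rule mixed_partials_eq[where h = "\<lambda>x y. f (?q x y)"
        and hx = "\<lambda>x y. pd c f (?q x y)" and hy = "\<lambda>x y. pd d f (?q x y)"
        and hxy = "\<lambda>x y. pd d (pd c f) (?q x y)" and hyx = "\<lambda>x y. pd c (pd d f) (?q x y)",
        OF deriv_c[of "[]", simplified] deriv_d[of "[c]", simplified]
        deriv_d[of "[]", simplified] deriv_c[of "[d]", simplified]
        cont[of "[d, c]", simplified] cont[of "[c, d]", simplified]])
  then show ?thesis by simp
qed simp

lemma jsmooth_pd:
  assumes "jsmooth f"
  shows "jsmooth (pd c f)"
proof -
  have "iter_pd cs (pd c f) = iter_pd (cs @ [c]) f" for cs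
    by (induction cs) auto
  moreover obtain n where "jet_order f n" using assms unfolding jsmooth_def by blast
  ultimately show ?thesis using assms jet_order_pd unfolding jsmooth_def by metis
qed

lemma pd_add:
  assumes "partial_differentiable f c p" "partial_differentiable g c p"
  shows "pd c (\<lambda>q. f q + g q) p = pd c f p + pd c g p"
  unfolding pd_def[of c "\<lambda>q. f q + g q"]
  by (rule DERIV_imp_deriv) (simp add: DERIV_add has_real_derivative_pd assms)

lemma pd_diff:
  assumes "partial_differentiable f c p" "partial_differentiable g c p"
  shows "pd c (\<lambda>q. f q - g q) p = pd c f p - pd c g p"
  unfolding pd_def[of c "\<lambda>q. f q - g q"]
  by (rule DERIV_imp_deriv) (simp add: DERIV_diff has_real_derivative_pd assms)

lemma pd_mult:
  assumes "partial_differentiable f c p" "partial_differentiable g c p"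
  shows "pd c (\<lambda>q. f q * g q) p = pd c f p * g p + f p * pd c g p"
proof -
  have "((\<lambda>s. f (p(c := s)) * g (p(c := s))) has_real_derivative
      pd c f p * g (p(c := p c)) + pd c g p * f (p(c := p c))) (at (p c))"
    by (rule DERIV_mult[OF has_real_derivative_pd[OF assms(1)] has_real_derivative_pd[OF assms(2)]])
  then show ?thesis unfolding pd_def[of c "\<lambda>q. f q * g q"] by (simp add: DERIV_imp_deriv)
qed

lemma pd_inverse:
  assumes "partial_differentiable f c p" "f p \<noteq> 0"
  shows "pd c (\<lambda>q. inverse (f q)) p = - (inverse (f p) * pd c f p * inverse (f p))"
proof -
  have "((\<lambda>s. inverse (f (p(c := s)))) has_real_derivative
      - (inverse (f (p(c := p c))) * pd c f p * inverse (f (p(c := p c))))) (at (p c))"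
    by (rule DERIV_inverse'[OF has_real_derivative_pd[OF assms(1)]]) (use assms(2) in simp)
  then show ?thesis unfolding pd_def[of c "\<lambda>q. inverse (f q)"] by (simp add: DERIV_imp_deriv)
qed

lemma pd_sum:
  assumes "finite I" "\<And>i. i \<in> I \<Longrightarrow> partial_differentiable (F i) c p"
  shows "pd c (\<lambda>q. \<Sum>i\<in>I. F i q) p = (\<Sum>i\<in>I. pd c (F i) p)"
  unfolding pd_def[of c "\<lambda>q. \<Sum>i\<in>I. F i q"]
  by (rule DERIV_imp_deriv) (simp add: DERIV_sum has_real_derivative_pd assms)

text \<open>Showing that tlam and tgam are jsmooth would require control of all their iterated
  partials. Instead they are placed in this rational closure of the smooth functions, which still
  has finite order, partial differentiability and closure under pd: all that the calculus of Dt
  uses.\<close>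

inductive_set jet_algebra :: "jetfun set" where
  smooth: "jsmooth f \<Longrightarrow> f \<in> jet_algebra"
| coord: "(\<lambda>p. p c) \<in> jet_algebra"
| const: "(\<lambda>p. r) \<in> jet_algebra"
| add: "f \<in> jet_algebra \<Longrightarrow> g \<in> jet_algebra \<Longrightarrow> (\<lambda>p. f p + g p) \<in> jet_algebra"
| diff: "f \<in> jet_algebra \<Longrightarrow> g \<in> jet_algebra \<Longrightarrow> (\<lambda>p. f p - g p) \<in> jet_algebra"
| mult: "f \<in> jet_algebra \<Longrightarrow> g \<in> jet_algebra \<Longrightarrow> (\<lambda>p. f p * g p) \<in> jet_algebra"
| inverse: "f \<in> jet_algebra \<Longrightarrow> (\<forall>p. f p \<noteq> 0) \<Longrightarrow> (\<lambda>p. inverse (f p)) \<in> jet_algebra"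

lemma jet_algebra_finite_order: "f \<in> jet_algebra \<Longrightarrow> \<exists>n. jet_order f n"
proof (induction rule: jet_algebra.induct)
  case (smooth f)
  then show ?case by (simp add: jsmooth_def)
next
  case (coord c)
  then show ?case by (rule jet_order_coord)
next
  case (const r)
  then show ?case by (simp add: jet_order_def)
next
  case (add f g)
  then show ?case using jet_order_binop[where H = "(+)"] by blast
next
  case (diff f g)
  then show ?case using jet_order_binop[where H = "(-)"] by blast
next
  case (mult f g)
  then show ?case using jet_order_binop[where H = "(*)"] by blast
next
  case (inverse f)
  then show ?case using jet_order_binop[where H = "\<lambda>x y. inverse x"] by blast
qed

lemma jet_algebra_partial_differentiable:
  "f \<in> jet_algebra \<Longrightarrow> partial_differentiable f c p"
proof (induction arbitrary: p rule: jet_algebra.induct)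
  case (smooth f)
  then show ?case using jsmooth_partial_differentiable[of f "[]"] by (simp only: iter_pd.simps)
next
  case (coord d)
  then show ?case by (cases "d = c") auto
next
  case (inverse f)
  then show ?case by (intro differentiable_inverse) auto
qed auto

lemma jet_algebra_pd: "f \<in> jet_algebra \<Longrightarrow> pd c f \<in> jet_algebra"
proof (induction rule: jet_algebra.induct)
  case (smooth f)
  then show ?case by (simp add: jsmooth_pd jet_algebra.smooth)
next
  case (coord d)
  have "pd c (\<lambda>p. p d) = (\<lambda>p. if c = d then 1 else 0)"
    by (rule ext) (rule pd_coord)
  then show ?case by (simp add: jet_algebra.const)
next
  case (const r)
  have "pd c (\<lambda>p. r) = (\<lambda>p. 0)" by (rule ext) (rule pd_const)
  then show ?case by (simp add: jet_algebra.const)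
next
  case (add f g)
  have "pd c (\<lambda>p. f p + g p) = (\<lambda>p. pd c f p + pd c g p)"
    by (rule ext) (simp add: pd_add jet_algebra_partial_differentiable add.hyps)
  then show ?case by (simp add: add.IH jet_algebra.add)
next
  case (diff f g)
  have "pd c (\<lambda>p. f p - g p) = (\<lambda>p. pd c f p - pd c g p)"
    by (rule ext) (simp add: pd_diff jet_algebra_partial_differentiable diff.hyps)
  then show ?case by (simp add: diff.IH jet_algebra.diff)
next
  case (mult f g)
  have "pd c (\<lambda>p. f p * g p) = (\<lambda>p. pd c f p * g p + f p * pd c g p)"
    by (rule ext) (simp add: pd_mult jet_algebra_partial_differentiable mult.hyps)
  then show ?case by (simp add: mult.IH mult.hyps jet_algebra.add jet_algebra.mult)
next
  case (inverse f)
  have "pd c (\<lambda>p. inverse (f p)) = (\<lambda>p. (- 1) * (inverse (f p) * pd c f p * inverse (f p)))"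
    by (rule ext) (simp add: pd_inverse jet_algebra_partial_differentiable inverse.hyps)
  then show ?case
    by (simp only:) (intro jet_algebra.mult jet_algebra.const jet_algebra.inverse inverse)
qed

lemma jet_algebra_sum:
  "(\<And>i. i \<le> n \<Longrightarrow> F i \<in> jet_algebra) \<Longrightarrow> (\<lambda>p. \<Sum>i\<le>(n::nat). F i p) \<in> jet_algebra"
  by (induction n) (simp_all add: jet_algebra.add)

section \<open>The total derivative\<close>

lemma Dt_eq_sum:
  assumes "jet_order f n"
  shows "Dt f p = pd T f p + (\<Sum>i\<le>n. p (X (Suc i)) * pd (X i) f p)"
proof -
  have ord: "jet_order f (jord f)" and le: "jord f \<le> n"
    unfolding jord_def using assms by (rule LeastI, rule Least_le)
  have "(\<Sum>i\<le>jord f. p (X (Suc i)) * pd (X i) f p) = (\<Sum>i\<le>n. p (X (Suc i)) * pd (X i) f p)"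
    by (rule sum.mono_neutral_left) (use le pd_beyond_order[OF ord] in auto)
  then show ?thesis unfolding Dt_def by simp
qed

lemma Dt_zero: "Dt (\<lambda>q. 0) p = 0"
  unfolding Dt_def by (simp add: pd_const)

lemma jet_algebra_Dt:
  assumes "f \<in> jet_algebra"
  shows "Dt f \<in> jet_algebra"
proof -
  obtain n where "jet_order f n" using jet_algebra_finite_order[OF assms] by blast
  then have "Dt f = (\<lambda>p. pd T f p + (\<Sum>i\<le>n. p (X (Suc i)) * pd (X i) f p))"
    by (intro ext Dt_eq_sum)
  then show ?thesis
    by (simp only:) (intro jet_algebra.add jet_algebra_sum jet_algebra.mult jet_algebra.coord jet_algebra_pd assms)
qed

lemma jet_algebra_common_order:
  assumes "u \<in> jet_algebra" "v \<in> jet_algebra"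
  obtains N where "jet_order u N" "jet_order v N" "jet_order (\<lambda>q. H (u q) (v q)) N"
proof -
  obtain nu nv where "jet_order u nu" "jet_order v nv"
    using jet_algebra_finite_order assms by blast
  then show thesis
    by (intro that[of "nu + nv"] jet_order_binop) (auto intro: jet_order_mono)
qed

lemma Dt_add:
  assumes "u \<in> jet_algebra" "v \<in> jet_algebra"
  shows "Dt (\<lambda>q. u q + v q) p = Dt u p + Dt v p"
proof -
  obtain N where "jet_order u N" "jet_order v N" "jet_order (\<lambda>q. u q + v q) N"
    using jet_algebra_common_order[OF assms] .
  then show ?thesis
    by (simp add: Dt_eq_sum pd_add jet_algebra_partial_differentiable assms sum.distrib algebra_simps)
qed

lemma Dt_mult:
  assumes "u \<in> jet_algebra" "v \<in> jet_algebra"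
  shows "Dt (\<lambda>q. u q * v q) p = Dt u p * v p + u p * Dt v p"
proof -
  obtain N where "jet_order u N" "jet_order v N" "jet_order (\<lambda>q. u q * v q) N"
    using jet_algebra_common_order[OF assms] .
  then show ?thesis
    by (simp add: Dt_eq_sum pd_mult jet_algebra_partial_differentiable assms
        sum.distrib sum_distrib_left sum_distrib_right algebra_simps)
qed

lemma Dt_sum:
  assumes "\<And>i. i \<le> n \<Longrightarrow> F i \<in> jet_algebra"
  shows "Dt (\<lambda>q. \<Sum>i\<le>(n::nat). F i q) p = (\<Sum>i\<le>n. Dt (F i) p)"
  using assms by (induction n) (simp_all add: Dt_add jet_algebra_sum)

text \<open>Only the term x_{j+1} \<partial>_{x_j} of Dt depends explicitly on x_{j+1}; symmetry of second
  partials lets pd pass through the remaining terms.\<close>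

lemma pd_Dt:
  assumes f: "jsmooth f"
  shows "pd c (Dt f) p = Dt (pd c f) p + (case c of X (Suc j) \<Rightarrow> pd (X j) f p | _ \<Rightarrow> 0)"
proof -
  have fA: "f \<in> jet_algebra" using f by (rule jet_algebra.smooth)
  obtain m where "jet_order f m" using f unfolding jsmooth_def by blast
  define N where "N = m + (case c of X i \<Rightarrow> i | T \<Rightarrow> 0)"
  have ord: "jet_order f N" using \<open>jet_order f m\<close> by (rule jet_order_mono) (simp add: N_def)
  let ?F = "\<lambda>j q. q (X (Suc j)) * pd (X j) f q"
  have FA: "?F j \<in> jet_algebra" for j
    by (intro jet_algebra.mult jet_algebra.coord jet_algebra_pd fA)
  have dT: "partial_differentiable (pd T f) c p"
    by (rule jet_algebra_partial_differentiable[OF jet_algebra_pd[OF fA]])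
  have dF: "partial_differentiable (?F j) c p" for j
    by (rule jet_algebra_partial_differentiable[OF FA])
  have dC: "partial_differentiable (\<lambda>q. q (X (Suc j))) c p" for j
    by (rule jet_algebra_partial_differentiable[OF jet_algebra.coord])
  have dP: "partial_differentiable (pd (X j) f) c p" for j
    by (rule jet_algebra_partial_differentiable[OF jet_algebra_pd[OF fA]])
  have dS: "partial_differentiable (\<lambda>q. \<Sum>j\<le>N. ?F j q) c p"
    by (rule jet_algebra_partial_differentiable) (intro jet_algebra_sum FA)
  have "Dt f = (\<lambda>q. pd T f q + (\<Sum>j\<le>N. ?F j q))"
    by (rule ext) (rule Dt_eq_sum[OF ord])
  then have "pd c (Dt f) p = pd c (pd T f) p + (\<Sum>j\<le>N. pd c (?F j) p)"
    by (simp only: pd_add[OF dT dS] pd_sum[OF finite_atMost dF])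
  also have "\<dots> = pd c (pd T f) p + (\<Sum>j\<le>N. p (X (Suc j)) * pd c (pd (X j) f) p)
      + (\<Sum>j\<le>N. (if c = X (Suc j) then 1 else 0) * pd (X j) f p)"
    by (simp add: pd_mult[OF dC dP] pd_coord sum.distrib)
  also have "pd c (pd T f) p + (\<Sum>j\<le>N. p (X (Suc j)) * pd c (pd (X j) f) p) = Dt (pd c f) p"
    by (simp add: Dt_eq_sum[OF jet_order_pd[OF ord]] pd_commute[OF f])
  also have "(\<Sum>j\<le>N. (if c = X (Suc j) then 1 else 0) * pd (X j) f p)
      = (case c of X (Suc j) \<Rightarrow> pd (X j) f p | _ \<Rightarrow> 0)"
    by (auto simp: N_def if_distrib[where f = "\<lambda>x. x * _"] cong: if_cong split: coord.split nat.split)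
  finally show ?thesis .
qed

section \<open>Commutators of vector fields with the total derivative\<close>

definition vfield :: "jetfun \<Rightarrow> (nat \<Rightarrow> jetfun) \<Rightarrow> nat \<Rightarrow> jetfun \<Rightarrow> jetfun" where
  "vfield a \<xi> k f p = a p * pd T f p + (\<Sum>i\<le>k. \<xi> i p * pd (X i) f p)"

lemma vfield_Suc_order:
  assumes "jet_order f m"
  shows "vfield a \<xi> (Suc m) f = vfield a \<xi> m f"
  using pd_beyond_order[OF assms] by (simp add: vfield_def fun_eq_iff)

lemma vfield_Dt:
  assumes f: "jsmooth f" and ord: "jet_order f m"
  shows "vfield a \<xi> (Suc m) (Dt f) p = a p * Dt (pd T f) p
      + (\<Sum>i\<le>m. \<xi> i p * Dt (pd (X i) f) p) + (\<Sum>j\<le>m. \<xi> (Suc j) p * pd (X j) f p)"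
proof -
  have "pd (X (Suc m)) f = (\<lambda>q. 0)"
    using pd_beyond_order[OF ord] by auto
  then have "(\<Sum>i\<le>Suc m. \<xi> i p * Dt (pd (X i) f) p) = (\<Sum>i\<le>m. \<xi> i p * Dt (pd (X i) f) p)"
    by (simp add: Dt_zero)
  moreover have "(\<Sum>i\<le>Suc m. \<xi> i p * (case i of 0 \<Rightarrow> 0 | Suc j \<Rightarrow> pd (X j) f p))
      = (\<Sum>j\<le>m. \<xi> (Suc j) p * pd (X j) f p)"
    by (simp add: sum.atMost_Suc_shift del: sum.atMost_Suc)
  ultimately show ?thesis
    by (simp add: vfield_def pd_Dt[OF f] distrib_left sum.distrib del: sum.atMost_Suc)
qed

lemma Dt_vfield:
  assumes "a \<in> jet_algebra" "\<And>i. \<xi> i \<in> jet_algebra" "f \<in> jet_algebra"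
  shows "Dt (vfield a \<xi> k f) p = Dt a p * pd T f p + a p * Dt (pd T f) p
      + (\<Sum>i\<le>k. Dt (\<xi> i) p * pd (X i) f p + \<xi> i p * Dt (pd (X i) f) p)"
proof -
  have "vfield a \<xi> k f = (\<lambda>q. a q * pd T f q + (\<Sum>i\<le>k. \<xi> i q * pd (X i) f q))"
    by (rule ext) (rule vfield_def)
  then show ?thesis
    by (simp add: Dt_add Dt_mult Dt_sum jet_algebra.mult jet_algebra_sum jet_algebra_pd assms)
qed

lemma vfield_Dt_commutator:
  assumes a: "a \<in> jet_algebra" and \<xi>: "\<And>i. \<xi> i \<in> jet_algebra"
    and f: "jsmooth f" and ord: "jet_order f m"
  shows "vfield a \<xi> (Suc m) (Dt f) p - Dt (vfield a \<xi> (Suc m) f) p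
      = - Dt a p * pd T f p + (\<Sum>j\<le>m. (\<xi> (Suc j) p - Dt (\<xi> j) p) * pd (X j) f p)"
proof -
  have "Dt (vfield a \<xi> (Suc m) f) p = Dt a p * pd T f p + a p * Dt (pd T f) p
      + (\<Sum>i\<le>m. Dt (\<xi> i) p * pd (X i) f p + \<xi> i p * Dt (pd (X i) f) p)"
    unfolding vfield_Suc_order[OF ord] using a \<xi> f by (simp add: Dt_vfield jet_algebra.smooth)
  then show ?thesis
    by (simp add: vfield_Dt[OF f ord] sum.distrib left_diff_distrib sum_subtractf)
qed

section \<open>Telescopic vector fields\<close>

lemma tgam_Suc:
  assumes "\<forall>p. b p - a p * p (X 1) \<noteq> 0"
  shows "tgam a b g1 (Suc j) p = Dt (tgam a b g1 j) p - Dt a p * p (X (Suc j))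
     + tlam a b g1 p * (tgam a b g1 j p - a p * p (X (Suc j)))"
proof (cases j)
  case 0
  have "b p - p (X 1) * a p \<noteq> 0" using assms by (metis mult.commute)
  with 0 show ?thesis by (simp add: tlam_def field_simps)
qed simp

lemma tgam_eq_prolong:
  assumes "\<forall>p. b p - a p * p (X 1) \<noteq> 0"
  shows "tgam a b g1 j = prolong a b (tlam a b g1) j"
proof (induction j)
  case (Suc j)
  show ?case by (rule ext) (simp only: tgam_Suc[OF assms] prolong.simps Suc)
qed simp

lemma jet_algebra_tlam:
  assumes "jsmooth a" "jsmooth b" "jsmooth g1" and nz: "\<forall>p. b p - a p * p (X 1) \<noteq> 0"
  shows "tlam a b g1 \<in> jet_algebra"
proof -
  have "tlam a b g1 = (\<lambda>p. (g1 p + p (X 1) * Dt a p - Dt b p) * inverse (b p - p (X 1) * a p))"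
    by (rule ext) (simp add: tlam_def divide_inverse)
  moreover have "\<forall>p. b p - p (X 1) * a p \<noteq> 0" using nz by (simp add: mult.commute)
  ultimately show ?thesis
    by (simp only:) (intro jet_algebra.intros jet_algebra_Dt assms)
qed

lemma jet_algebra_tgam:
  assumes "jsmooth a" "jsmooth b" "jsmooth g1" and nz: "\<forall>p. b p - a p * p (X 1) \<noteq> 0"
  shows "tgam a b g1 j \<in> jet_algebra"
proof (induction j)
  case 0
  then show ?case using assms by (simp add: jet_algebra.smooth)
next
  case (Suc j)
  have "tgam a b g1 (Suc j) = (\<lambda>p. Dt (tgam a b g1 j) p - Dt a p * p (X (Suc j))
     + tlam a b g1 p * (tgam a b g1 j p - a p * p (X (Suc j))))"
    by (rule ext) (rule tgam_Suc[OF nz])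
  then show ?case
    by (simp only:) (intro jet_algebra.intros jet_algebra_Dt jet_algebra_tlam assms Suc)
qed

lemma ttau_eq_vfield: "ttau k a b g1 = vfield a (tgam a b g1) k"
  by (simp add: fun_eq_iff ttau_def vfield_def atMost_atLeast0 sum.atLeast_Suc_atMost)

lemma ttau_Dt_commutator:
  assumes a: "jsmooth a" and b: "jsmooth b" and g1: "jsmooth g1"
    and nz: "\<forall>p. b p - a p * p (X 1) \<noteq> 0"
    and f: "jsmooth f" and ord: "jet_order f m"
  shows "ttau (Suc m) a b g1 (Dt f) p - Dt (ttau (Suc m) a b g1 f) p
      = tlam a b g1 p * ttau (Suc m) a b g1 f p + (- (Dt a p + tlam a b g1 p * a p)) * Dt f p"
proof -
  let ?gam = "tgam a b g1" and ?lam = "tlam a b g1 p"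
  have "ttau (Suc m) a b g1 (Dt f) p - Dt (ttau (Suc m) a b g1 f) p
      = - Dt a p * pd T f p + (\<Sum>j\<le>m. (?gam (Suc j) p - Dt (?gam j) p) * pd (X j) f p)"
    unfolding ttau_eq_vfield
    by (rule vfield_Dt_commutator[OF jet_algebra.smooth[OF a] jet_algebra_tgam[OF a b g1 nz] f ord])
  also have "\<dots> = - Dt a p * pd T f p
      + (\<Sum>j\<le>m. (?lam * ?gam j p - (Dt a p + ?lam * a p) * p (X (Suc j))) * pd (X j) f p)"
    by (simp add: tgam_Suc[OF nz] algebra_simps)
  also have "\<dots> = ?lam * ttau (Suc m) a b g1 f p + (- (Dt a p + ?lam * a p)) * Dt f p"
    unfolding ttau_eq_vfield vfield_Suc_order[OF ord] vfield_def Dt_eq_sum[OF ord]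
    by (simp add: algebra_simps sum.distrib sum_distrib_left sum_subtractf sum_negf)
  finally show ?thesis .
qed

theorem theorem2p3:
  fixes k :: nat and a b g1 :: jetfun
  assumes "k \<ge> 1"
    and "jsmooth a" and "jsmooth b" and "jsmooth g1"
    and "jet_order a 1" and "jet_order b 1" and "jet_order g1 1"
    and "\<forall>p. b p - a p * p (X 1) \<noteq> 0"
  shows "(\<forall>f. jsmooth f \<and> jet_order f (k - 1) \<longrightarrow>
           (\<forall>p. ttau k a b g1 (Dt f) p - Dt (ttau k a b g1 f) p
                = tlam a b g1 p * ttau k a b g1 f p
                  + (- (Dt a p + tlam a b g1 p * a p)) * Dt f p))
      \<and> (\<forall>i\<in>{1..k}. \<forall>p. tgam a b g1 i p = prolong a b (tlam a b g1) i p)"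
proof -
  obtain m where k: "k = Suc m" using \<open>k \<ge> 1\<close> by (cases k) auto
  show ?thesis
    unfolding k using ttau_Dt_commutator[OF assms(2-4,8)] tgam_eq_prolong[OF assms(8)] by simp
qed

end
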